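(* Let $G$ be any graph of order $n$ and let $H$ be any graph with a root vertex $v$. Then $$\rho(G\circ_v H)=\begin{cases}\rho(G)+n(\rho(H)-1), & \text{if } v\in P_H \text{ for every maximum packing } P_H \text{ of } H,\\ n\rho(H), & \text{if } v\notin P_H \text{ for some maximum packing } P_H \text{ of } H.\end{cases}$$
   Context: All graphs are finite and simple. A packing of $G$ is a set $P\subseteq V(G)$ with $N[u]\cap N[v]=\emptyset$ for all distinct $u,v\in P$ ($N[\cdot]$ the closed neighborhood); $\rho(G)$ is the maximum size of a packing. Given $G$ with $V(G)=\{g_1,\dots,g_n\}$ and a graph $H$ with root $v\in V(H)$, the rooted product $G\circ_v H$ has vertex set $V(G)\times V(H)$ and edge set $\bigcup_{i=1}^n\{(g_i,h)(g_i,h'): hh'\in E(H)\}\cup\{(g_i,v)(g_j,v): g_ig_j\in E(G)\}$ (i.e., a copy of $H$ is attached to each vertex of $G$ by identifying its root with that vertex). *)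

theory Defs
  imports Main
begin

definition simple_graph :: "'a set \<Rightarrow> ('a \<Rightarrow> 'a \<Rightarrow> bool) \<Rightarrow> bool" where
  "simple_graph V E \<longleftrightarrow> finite V \<and> (\<forall>x y. E x y \<longrightarrow> x \<in> V \<and> y \<in> V)
     \<and> (\<forall>x y. E x y \<longrightarrow> E y x) \<and> (\<forall>x. \<not> E x x)"

definition closed_nbhd :: "'a set \<Rightarrow> ('a \<Rightarrow> 'a \<Rightarrow> bool) \<Rightarrow> 'a \<Rightarrow> 'a set" where
  "closed_nbhd V E u = insert u {w \<in> V. E u w}"

definition packing :: "'a set \<Rightarrow> ('a \<Rightarrow> 'a \<Rightarrow> bool) \<Rightarrow> 'a set \<Rightarrow> bool" where
  "packing V E P \<longleftrightarrow> P \<subseteq> V \<and>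
     (\<forall>u\<in>P. \<forall>w\<in>P. u \<noteq> w \<longrightarrow> closed_nbhd V E u \<inter> closed_nbhd V E w = {})"

definition packing_number :: "'a set \<Rightarrow> ('a \<Rightarrow> 'a \<Rightarrow> bool) \<Rightarrow> nat" where
  "packing_number V E = Max {card P | P. packing V E P}"

definition max_packing :: "'a set \<Rightarrow> ('a \<Rightarrow> 'a \<Rightarrow> bool) \<Rightarrow> 'a set \<Rightarrow> bool" where
  "max_packing V E P \<longleftrightarrow> packing V E P \<and> card P = packing_number V E"

definition rooted_prod_V :: "'a set \<Rightarrow> 'b set \<Rightarrow> ('a \<times> 'b) set" where
  "rooted_prod_V VG VH = VG \<times> VH"

definition rooted_prod_E ::
  "'a set \<Rightarrow> ('a \<Rightarrow> 'a \<Rightarrow> bool) \<Rightarrow> 'b set \<Rightarrow> ('b \<Rightarrow> 'b \<Rightarrow> bool) \<Rightarrow> 'b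
     \<Rightarrow> ('a \<times> 'b) \<Rightarrow> ('a \<times> 'b) \<Rightarrow> bool" where
  "rooted_prod_E VG EG VH EH v p q \<longleftrightarrow>
     fst p \<in> VG \<and> fst q \<in> VG \<and>
     ((fst p = fst q \<and> EH (snd p) (snd q)) \<or>
      (snd p = v \<and> snd q = v \<and> EG (fst p) (fst q)))"

end

theory Submission
  imports Defs
begin

text \<open>A packing of \<open>G \<circ>\<^sub>v H\<close> splits into its fibres \<open>{h. (g, h) \<in> P}\<close>, each a packing of the
  copy of \<open>H\<close> at \<open>g\<close>, and its root layer \<open>{g. (g, v) \<in> P}\<close>, a packing of \<open>G\<close>. If every
  maximum packing of \<open>H\<close> contains \<open>v\<close>, a fibre can only be of full size \<open>\<rho>(H)\<close> at a vertex of
  the root layer, which bounds \<open>\<rho>(G \<circ>\<^sub>v H)\<close> by \<open>\<rho>(G) + n(\<rho>(H) - 1)\<close>; the bound is attained by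
  taking a maximum packing \<open>R \<ni> v\<close> of every copy, with \<open>v\<close> removed outside a maximum packing
  of \<open>G\<close>. Otherwise a maximum packing of \<open>H\<close> avoiding \<open>v\<close>, copied into every fibre, attains
  the trivial bound \<open>n \<rho>(H)\<close>.\<close>

lemma finite_packing_cards:
  assumes "finite V"
  shows "finite {card P | P. packing V E P}"
proof (rule finite_subset)
  show "{card P | P. packing V E P} \<subseteq> {..card V}"
    using assms by (auto simp: packing_def card_mono)
qed simp

lemma card_le_packing_number:
  assumes "finite V" "packing V E P"
  shows "card P \<le> packing_number V E"
  unfolding packing_number_def using assms finite_packing_cards by (auto intro: Max_ge)

lemma max_packing_exists:
  assumes "finite V"
  obtains P where "max_packing V E P"
proof -
  have "packing V E {}" by (simp add: packing_def)
  then have "packing_number V E \<in> {card P | P. packing V E P}"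
    unfolding packing_number_def using finite_packing_cards[OF assms] by (intro Max_in) auto
  then show thesis using that by (auto simp: max_packing_def)
qed

lemma card_eq_sum_card_fibres:
  assumes "finite A" "finite B" "P \<subseteq> A \<times> B"
  shows "card P = (\<Sum>a\<in>A. card {b. (a, b) \<in> P})"
proof -
  have "P = Sigma A (\<lambda>a. {b. (a, b) \<in> P})" using assms(3) by auto
  moreover have "finite {b. (a, b) \<in> P}" for a
    using assms(2,3) by (auto intro: finite_subset)
  ultimately show ?thesis using assms(1) by (metis card_SigmaI)
qed

lemma closed_nbhd_self: "u \<in> closed_nbhd V E u"
  by (simp add: closed_nbhd_def)

locale rooted_product =
  fixes VG :: "'a set" and EG :: "'a \<Rightarrow> 'a \<Rightarrow> bool"
    and VH :: "'b set" and EH :: "'b \<Rightarrow> 'b \<Rightarrow> bool" and v :: 'b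
  assumes G: "simple_graph VG EG" and H: "simple_graph VH EH" and root: "v \<in> VH"
begin

abbreviation "V \<equiv> rooted_prod_V VG VH"
abbreviation "E \<equiv> rooted_prod_E VG EG VH EH v"

lemma closed_nbhd_rooted_prod:
  assumes "g \<in> VG"
  shows "closed_nbhd V E (g, h) =
    {g} \<times> closed_nbhd VH EH h \<union> (if h = v then closed_nbhd VG EG g \<times> {v} else {})"
  using assms root by (auto simp: closed_nbhd_def rooted_prod_E_def rooted_prod_V_def)

lemma packing_fibre:
  assumes "packing V E P" "g \<in> VG"
  shows "packing VH EH {h. (g, h) \<in> P}"
  unfolding packing_def
proof (intro conjI ballI impI subsetI)
  fix h assume "h \<in> {h. (g, h) \<in> P}"
  then show "h \<in> VH" using assms(1) unfolding packing_def rooted_prod_V_def by blast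
next
  fix h h' assume "h \<in> {h. (g, h) \<in> P}" "h' \<in> {h. (g, h) \<in> P}" "h \<noteq> h'"
  then have "closed_nbhd V E (g, h) \<inter> closed_nbhd V E (g, h') = {}"
    using assms(1) by (auto simp: packing_def)
  then show "closed_nbhd VH EH h \<inter> closed_nbhd VH EH h' = {}"
    unfolding closed_nbhd_rooted_prod[OF assms(2)] by blast
qed

lemma packing_root_layer:
  assumes "packing V E P"
  shows "packing VG EG {g. (g, v) \<in> P}"
  unfolding packing_def
proof (intro conjI ballI impI subsetI)
  fix g assume "g \<in> {g. (g, v) \<in> P}"
  then show "g \<in> VG" using assms by (auto simp: packing_def rooted_prod_V_def)
next
  fix g g' assume "g \<in> {g. (g, v) \<in> P}" "g' \<in> {g. (g, v) \<in> P}" "g \<noteq> g'"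
  moreover from this have "g \<in> VG" "g' \<in> VG"
    using assms by (auto simp: packing_def rooted_prod_V_def)
  ultimately have "closed_nbhd V E (g, v) \<inter> closed_nbhd V E (g', v) = {}"
    using assms by (auto simp: packing_def)
  then show "closed_nbhd VG EG g \<inter> closed_nbhd VG EG g' = {}"
    using \<open>g \<in> VG\<close> \<open>g' \<in> VG\<close> by (auto simp: closed_nbhd_rooted_prod)
qed

lemma packing_rooted_prod:
  assumes Q: "packing VG EG Q" and R: "packing VH EH R"
    and root_in_R: "Q \<noteq> {} \<Longrightarrow> v \<in> R"
  shows "packing V E (VG \<times> (R - {v}) \<union> Q \<times> {v})"
  unfolding packing_def
proof (intro conjI ballI impI)
  have "Q \<subseteq> VG" "R \<subseteq> VH" using Q R by (simp_all add: packing_def)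
  then show "VG \<times> (R - {v}) \<union> Q \<times> {v} \<subseteq> V"
    using root by (auto simp: rooted_prod_V_def)
next
  fix p q
  assume p: "p \<in> VG \<times> (R - {v}) \<union> Q \<times> {v}" and q: "q \<in> VG \<times> (R - {v}) \<union> Q \<times> {v}"
    and "p \<noteq> q"
  obtain g h g' h' where pq: "p = (g, h)" "q = (g', h')" by fastforce
  have mem: "g \<in> VG" "h \<in> R" "h = v \<Longrightarrow> g \<in> Q" "g' \<in> VG" "h' \<in> R" "h' = v \<Longrightarrow> g' \<in> Q"
    using p q pq Q root_in_R by (auto simp: packing_def)
  have disjR: "closed_nbhd VH EH k \<inter> closed_nbhd VH EH k' = {}"
    if "k \<in> R" "k' \<in> R" "k \<noteq> k'" for k k'
    using R that by (simp add: packing_def)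
  have disjQ: "closed_nbhd VG EG a \<inter> closed_nbhd VG EG a' = {}"
    if "a \<in> Q" "a' \<in> Q" "a \<noteq> a'" for a a'
    using Q that by (simp add: packing_def)
  show "closed_nbhd V E p \<inter> closed_nbhd V E q = {}"
  proof (rule ccontr)
    assume "closed_nbhd V E p \<inter> closed_nbhd V E q \<noteq> {}"
    then obtain a b where
      "(a = g \<and> b \<in> closed_nbhd VH EH h) \<or> (h = v \<and> b = v \<and> a \<in> closed_nbhd VG EG g)"
      "(a = g' \<and> b \<in> closed_nbhd VH EH h') \<or> (h' = v \<and> b = v \<and> a \<in> closed_nbhd VG EG g')"
      using mem unfolding pq by (auto simp: closed_nbhd_rooted_prod split: if_splits)
    then show False
      using mem disjR disjQ \<open>p \<noteq> q\<close> pq closed_nbhd_self[of v VH EH] closed_nbhd_self[of _ VG EG]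
      by blast
  qed
qed

lemma finite_V: "finite V"
  using G H by (simp add: simple_graph_def rooted_prod_V_def)

lemma card_packing_eq_sum_fibres:
  assumes "packing V E P"
  shows "card P = (\<Sum>g\<in>VG. card {h. (g, h) \<in> P})"
  using assms G H by (intro card_eq_sum_card_fibres) (auto simp: packing_def simple_graph_def rooted_prod_V_def)

lemma packing_number_rooted_prod_le: "packing_number V E \<le> card VG * packing_number VH EH"
proof -
  have finH: "finite VH" using H by (simp add: simple_graph_def)
  obtain P where P: "packing V E P" "card P = packing_number V E"
    using max_packing_exists[OF finite_V] by (auto simp: max_packing_def)
  have "card {h. (g, h) \<in> P} \<le> packing_number VH EH" if "g \<in> VG" for g
    using finH packing_fibre[OF P(1) that] by (rule card_le_packing_number)
  then have "card P \<le> (\<Sum>g\<in>VG. packing_number VH EH)"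
    unfolding card_packing_eq_sum_fibres[OF P(1)] by (rule sum_mono)
  then show ?thesis using P(2) by simp
qed

lemma packing_number_rooted_prod_le_root:
  assumes "\<forall>R. max_packing VH EH R \<longrightarrow> v \<in> R"
  shows "packing_number V E + card VG \<le> packing_number VG EG + card VG * packing_number VH EH"
proof -
  have finG: "finite VG" and finH: "finite VH" using G H by (simp_all add: simple_graph_def)
  obtain P where P: "packing V E P" "card P = packing_number V E"
    using max_packing_exists[OF finite_V] by (auto simp: max_packing_def)
  define S where "S = {g. (g, v) \<in> P}"
  have S: "packing VG EG S" unfolding S_def using P(1) by (rule packing_root_layer)
  then have "S \<subseteq> VG" by (simp add: packing_def)
  have fibre_le: "card {h. (g, h) \<in> P} + (if g \<in> S then 0 else 1) \<le> packing_number VH EH"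
    if "g \<in> VG" for g
  proof -
    have fibre: "packing VH EH {h. (g, h) \<in> P}" using P(1) that by (rule packing_fibre)
    then have "card {h. (g, h) \<in> P} \<le> packing_number VH EH"
      using finH by (rule card_le_packing_number[rotated])
    moreover have "card {h. (g, h) \<in> P} \<noteq> packing_number VH EH" if "g \<notin> S"
      using assms fibre that by (auto simp: max_packing_def S_def)
    ultimately show ?thesis by auto
  qed
  have "card P + card (VG - S) = (\<Sum>g\<in>VG. card {h. (g, h) \<in> P} + (if g \<in> S then 0 else 1))"
    using P(1) finG \<open>S \<subseteq> VG\<close>
    by (simp add: card_packing_eq_sum_fibres sum.distrib sum.If_cases Diff_eq Int_commute)
  also have "\<dots> \<le> card VG * packing_number VH EH"
    using sum_mono[OF fibre_le] by simp
  finally have "card P + card (VG - S) \<le> card VG * packing_number VH EH" .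
  moreover have "card VG = card S + card (VG - S)"
    using finG \<open>S \<subseteq> VG\<close> by (simp add: card_Diff_subset card_mono finite_subset)
  moreover have "card S \<le> packing_number VG EG" using finG S by (rule card_le_packing_number)
  ultimately show ?thesis using P(2) by linarith
qed

lemma packing_number_rooted_prod_ge_root:
  assumes "max_packing VH EH R" "v \<in> R"
  shows "packing_number VG EG + card VG * packing_number VH EH \<le> packing_number V E + card VG"
proof -
  have finG: "finite VG" and finH: "finite VH" using G H by (simp_all add: simple_graph_def)
  obtain Q where Q: "packing VG EG Q" "card Q = packing_number VG EG"
    using max_packing_exists[OF finG] by (auto simp: max_packing_def)
  have R: "packing VH EH R" "card R = packing_number VH EH" using assms(1) by (simp_all add: max_packing_def)
  have "Q \<subseteq> VG" "finite R" using Q(1) R(1) finH by (auto simp: packing_def intro: finite_subset)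
  then have "card (VG \<times> (R - {v}) \<union> Q \<times> {v}) = card VG * card (R - {v}) + card Q"
    using finG by (subst card_Un_disjoint) (auto simp: card_cartesian_product intro: finite_subset)
  moreover have "card R = Suc (card (R - {v}))"
    using \<open>finite R\<close> assms(2) by (rule card.remove)
  moreover have "card (VG \<times> (R - {v}) \<union> Q \<times> {v}) \<le> packing_number V E"
    using finite_V packing_rooted_prod[OF Q(1) R(1) assms(2)] by (rule card_le_packing_number)
  ultimately show ?thesis using Q(2) R(2) by simp
qed

lemma packing_number_rooted_prod_ge:
  assumes "max_packing VH EH R" "v \<notin> R"
  shows "card VG * packing_number VH EH \<le> packing_number V E"
proof -
  have R: "packing VH EH R" "card R = packing_number VH EH" using assms(1) by (simp_all add: max_packing_def)
  have "packing VG EG {}" by (simp add: packing_def)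
  from packing_rooted_prod[OF this R(1)] have "packing V E (VG \<times> R)"
    using assms(2) by simp
  then have "card (VG \<times> R) \<le> packing_number V E"
    using finite_V by (rule card_le_packing_number[rotated])
  then show ?thesis using R(2) by (simp add: card_cartesian_product)
qed

end

theorem mainTheorem15:
  fixes VG :: "'a set" and EG :: "'a \<Rightarrow> 'a \<Rightarrow> bool"
    and VH :: "'b set" and EH :: "'b \<Rightarrow> 'b \<Rightarrow> bool" and v :: 'b and n :: nat
  assumes "simple_graph VG EG" and "simple_graph VH EH" and "v \<in> VH"
    and "card VG = n"
  shows "int (packing_number (rooted_prod_V VG VH) (rooted_prod_E VG EG VH EH v)) =
     (if (\<forall>P. max_packing VH EH P \<longrightarrow> v \<in> P)
      then int (packing_number VG EG) + int n * (int (packing_number VH EH) - 1)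
      else int n * int (packing_number VH EH))"
proof -
  interpret rooted_product VG EG VH EH v using assms(1-3) by unfold_locales
  show ?thesis
  proof (cases "\<forall>P. max_packing VH EH P \<longrightarrow> v \<in> P")
    case True
    obtain R where R: "max_packing VH EH R"
      using max_packing_exists assms(2) by (auto simp: simple_graph_def)
    with True have "packing_number V E + n = packing_number VG EG + n * packing_number VH EH"
      using packing_number_rooted_prod_le_root packing_number_rooted_prod_ge_root[OF R] R assms(4)
      by (simp add: order_antisym)
    then show ?thesis using True by (simp add: algebra_simps) (metis of_nat_add of_nat_mult)
  next
    case False
    then obtain R' where "max_packing VH EH R'" "v \<notin> R'" by blast
    then have "packing_number V E = n * packing_number VH EH"
      using packing_number_rooted_prod_le packing_number_rooted_prod_ge assms(4) by (simp add: order_antisym)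
    then show ?thesis using False by (simp only: if_False of_nat_mult)
  qed
qed

end
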